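(* Let $\delta\in(0,1)$, let $X\subset\mathbb{R}_+$ be a Borel set with $0\in X$ and $\bar x=\sup X<\infty$, and let $0<x_0\le\bar x$. For $x\in[0,1]$ define $$q^*(x)=\frac{2(1-\delta)}{4-2\delta+x-\sqrt{x(x+8)}},\qquad \rho(x)=\frac12+\frac18\left(x+\sqrt{x(x+8)}\right).$$ Let $\bar q$ be the stationary decision rule with constant stopping probability $q^*(x_0/\bar x)$ (it stops with that probability after every history in which all alternatives $x_1,\dots,x_t$ equal $0$, and stops with probability $1$ after any history containing a nonzero alternative). Then, with $\mathcal B_X=\{F_{(z,\sigma)}:z\in X,\sigma\in[0,1]\}$: (a) $\bar q$ attains the performance ratio $\rho(x_0/\bar x)>1/2$, i.e. $R_{\bar q}(x_0,\mathcal B_X)=\rho(x_0/\bar x)>1/2$; (b) if $x_0/\bar x\le\delta^2/(2-\delta)$, then $\bar q$ is dynamically robust for $(x_0,\mathcal B_X)$.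
   Context: Sequential search model. Fix a discount factor $\delta\in(0,1)$, a Borel set $X\subset\mathbb{R}_+$ with $0\in X$, and an outside option $x_0>0$. Let $\mathcal F_X$ be the set of Borel probability distributions on $X$ with finite mean ("environments"); a set of feasible environments is any $\mathcal F\subset\mathcal F_X$. A history is $h_t=(x_0,x_1,\dots,x_t)$, $t\ge 0$, $x_i\in X$; its best-so-far alternative is $y_t=\max\{x_0,\dots,x_t\}$; $\mathcal H(x_0)$ is the set of all such histories. A decision rule $p$ assigns to each history $h$ a stopping probability $p(h)\in[0,1]$. Given an environment $F$ and a history $h_t$, the future alternatives are i.i.d. with law $F$; at each round $s\ge t$ the individual stops with probability $p(h_s)$ (otherwise she observes the next alternative), and stopping at round $s$ yields $\delta^{s-t}y_s$ (never stopping yields $0$). $U_p(F,h_t)$ is the expected payoff, and $V(F,h)=\sup_pU_p(F,h)$. A prior is a finitely supported probability distribution $\mu$ on $\mathcal F$; $\Delta(\mathcal F)$ is the set of priors, each $F$ identified with the point mass on it. An environment or prior is consistent with $h_t$ if $x_1,\dots,x_t$ occurs with positive probability under it; $\mathcal F(h)$, $\Delta(\mathcal F(h))$ denote the consistent ones. For consistent $\mu$, $U_p(\mu,h)=\sum_F\mu(F\mid h)U_p(F,h)$ with $\mu(\cdot\mid h)$ the Bayesian posterior, and $V(\mu,h)=\sup_pU_p(\mu,h)$. The performance ratio is $R_p(x_0,\mathcal F)=\inf_{h\in\mathcal H(x_0)}\inf_{\mu\in\Delta(\mathcal F(h))}U_p(\mu,h)/V(\mu,h)$, $R^*(x_0,\mathcal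 F)=\sup_pR_p(x_0,\mathcal F)$ over all decision rules, and $p$ is dynamically robust if $R_p(x_0,\mathcal F)=R^*(x_0,\mathcal F)$. A binary environment $F_{(z,\sigma)}$ is the lottery giving $0$ with probability $1-\sigma$ and $z$ with probability $\sigma$. *)

theory Defs
  imports "HOL-Probability.Probability"
begin

text \<open>A history h_t = (x0, x1, ..., xt) is the list
  x0 # [x1, ..., xt]. Environments are represented as discrete distributions
  (real pmf); all binary environments are of this form.\<close>

fun iexp :: "real pmf \<Rightarrow> nat \<Rightarrow> (real list \<Rightarrow> real) \<Rightarrow> real" where
  "iexp F 0 g = g []"
| "iexp F (Suc k) g = measure_pmf.expectation F (\<lambda>x. iexp F k (\<lambda>xs. g (x # xs)))"

definition best :: "real list \<Rightarrow> real" where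
  "best h = Max (set h)"

definition decision_rules :: "(real list \<Rightarrow> real) set" where
  "decision_rules = {p. \<forall>h. 0 \<le> p h \<and> p h \<le> 1}"

text \<open>U_p(F,h): stop at round t+k (after k further draws xs) with probability
  (prod_{j<k} (1 - p(h @ take j xs))) * p(h @ xs), obtaining delta^k * y.\<close>
definition payoff :: "real \<Rightarrow> (real list \<Rightarrow> real) \<Rightarrow> real pmf \<Rightarrow> real list \<Rightarrow> real" where
  "payoff \<delta> p F h = (\<Sum>k. \<delta> ^ k * iexp F k
      (\<lambda>xs. (\<Prod>j<k. 1 - p (h @ take j xs)) * p (h @ xs) * best (h @ xs)))"

definition likelihood :: "real pmf \<Rightarrow> real list \<Rightarrow> real" where
  "likelihood F h = prod_list (map (pmf F) (tl h))"

definition consistent :: "real pmf \<Rightarrow> real list \<Rightarrow> bool" where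
  "consistent F h \<longleftrightarrow> likelihood F h > 0"

definition posterior :: "real pmf pmf \<Rightarrow> real list \<Rightarrow> real pmf \<Rightarrow> real" where
  "posterior \<mu> h F = pmf \<mu> F * likelihood F h / (\<Sum>G\<in>set_pmf \<mu>. pmf \<mu> G * likelihood G h)"

definition payoff_prior :: "real \<Rightarrow> (real list \<Rightarrow> real) \<Rightarrow> real pmf pmf \<Rightarrow> real list \<Rightarrow> real" where
  "payoff_prior \<delta> p \<mu> h = (\<Sum>F\<in>set_pmf \<mu>. posterior \<mu> h F * payoff \<delta> p F h)"

definition value_prior :: "real \<Rightarrow> real pmf pmf \<Rightarrow> real list \<Rightarrow> real" where
  "value_prior \<delta> \<mu> h = (SUP p\<in>decision_rules. payoff_prior \<delta> p \<mu> h)"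

definition histories :: "real set \<Rightarrow> real \<Rightarrow> real list set" where
  "histories X x0 = {h. \<exists>xs. h = x0 # xs \<and> set xs \<subseteq> X}"

definition environments :: "real set \<Rightarrow> real pmf set" where
  "environments X = {F. set_pmf F \<subseteq> X \<and> integrable (measure_pmf F) (\<lambda>x. x)}"

definition priors :: "real pmf set \<Rightarrow> real pmf pmf set" where
  "priors Fs = {\<mu>. finite (set_pmf \<mu>) \<and> set_pmf \<mu> \<subseteq> Fs}"

definition consistent_priors :: "real pmf set \<Rightarrow> real list \<Rightarrow> real pmf pmf set" where
  "consistent_priors Fs h = priors {F \<in> Fs. consistent F h}"

text \<open>R_p(x0,F): infimum over all histories and all consistent priors
  (pairs (h,mu) with no consistent prior impose no constraint).\<close>
definition perf_ratio :: "real \<Rightarrow> real set \<Rightarrow> real \<Rightarrow> real pmf set \<Rightarrow> (real list \<Rightarrow> real) \<Rightarrow> real" where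
  "perf_ratio \<delta> X x0 Fs p = Inf {payoff_prior \<delta> p \<mu> h / value_prior \<delta> \<mu> h | h \<mu>.
       h \<in> histories X x0 \<and> \<mu> \<in> consistent_priors Fs h}"

definition opt_ratio :: "real \<Rightarrow> real set \<Rightarrow> real \<Rightarrow> real pmf set \<Rightarrow> real" where
  "opt_ratio \<delta> X x0 Fs = (SUP p\<in>decision_rules. perf_ratio \<delta> X x0 Fs p)"

definition dyn_robust :: "real \<Rightarrow> real set \<Rightarrow> real \<Rightarrow> real pmf set \<Rightarrow> (real list \<Rightarrow> real) \<Rightarrow> bool" where
  "dyn_robust \<delta> X x0 Fs p \<longleftrightarrow> p \<in> decision_rules \<and> perf_ratio \<delta> X x0 Fs p = opt_ratio \<delta> X x0 Fs"

definition binary_env :: "real \<Rightarrow> real \<Rightarrow> real pmf" where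
  "binary_env z \<sigma> = map_pmf (\<lambda>b. if b then z else 0) (bernoulli_pmf \<sigma>)"

definition binary_envs :: "real set \<Rightarrow> real pmf set" where
  "binary_envs X = {binary_env z \<sigma> | z \<sigma>. z \<in> X \<and> 0 \<le> \<sigma> \<and> \<sigma> \<le> 1}"

definition q_star :: "real \<Rightarrow> real \<Rightarrow> real" where
  "q_star \<delta> x = 2 * (1 - \<delta>) / (4 - 2 * \<delta> + x - sqrt (x * (x + 8)))"

definition rho :: "real \<Rightarrow> real" where
  "rho x = 1/2 + (x + sqrt (x * (x + 8))) / 8"

definition stationary_rule :: "real \<Rightarrow> real list \<Rightarrow> real" where
  "stationary_rule q h = (if (\<forall>x\<in>set (tl h). x = 0) then q else 1)"

end

theory Submission
  imports Defs
begin

text \<open>In a binary environment, whose only possible offer z arrives with probability sigma, the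
  Bellman recursion shows that no rule earns more than the larger of the best alternative so far and
  the value delta sigma z / (1 - delta + delta sigma) of waiting for z. Let x = x0 / Sup X and let rho
  be the root above 1/2 of (2 rho - 1)^2 = rho x. Until an offer appears the history carries no
  information, so the stationary rule has a closed-form payoff; with q* it is at least rho times that
  bound, with equality in the environment that never makes an offer. Averaging over the posterior
  extends this to priors.

  Conversely, an adversary combines the environment without offers with one offering nearly Sup X with
  a critical probability, and lets only zeros appear. A rule keeping its ratio above rho against both
  would make a weighted sum of the two excess ratios grow like delta^(-t) along the all-zero history,
  which bounded payoffs forbid. The critical probability is at most 1 exactly when
  x <= delta^2 / (2 - delta).\<close>

section \<open>Payoffs in binary environments\<close>

lemma binary_env_zero: "binary_env 0 \<sigma> = binary_env 0 0"
  unfolding binary_env_def by simp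

lemma consistent_binary_env_values:
  assumes "consistent (binary_env z \<sigma>) h" "y \<in> set (tl h)"
  shows "y = 0 \<or> y = z"
proof -
  have "prod_list (map (pmf (binary_env z \<sigma>)) (tl h)) \<noteq> 0"
    using assms(1) unfolding consistent_def likelihood_def by simp
  then have "pmf (binary_env z \<sigma>) y \<noteq> 0"
    using assms(2) by (auto simp: prod_list_zero_iff)
  then show ?thesis
    unfolding binary_env_def by (auto simp: set_pmf_iff[symmetric])
qed

lemma expectation_binary_env:
  assumes "0 \<le> \<sigma>" "\<sigma> \<le> 1"
  shows "measure_pmf.expectation (binary_env z \<sigma>) f = (1 - \<sigma>) * f 0 + \<sigma> * f z"
  using assms unfolding binary_env_def by simp

lemma iexp_binary_env_Suc:
  assumes "0 \<le> \<sigma>" "\<sigma> \<le> 1"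
  shows "iexp (binary_env z \<sigma>) (Suc k) g =
    (1 - \<sigma>) * iexp (binary_env z \<sigma>) k (\<lambda>xs. g (0 # xs)) + \<sigma> * iexp (binary_env z \<sigma>) k (\<lambda>xs. g (z # xs))"
  using assms by (simp add: expectation_binary_env)

lemma iexp_mult_left: "iexp F k (\<lambda>xs. c * g xs) = c * iexp F k g"
  by (induction k arbitrary: g) simp_all

lemma iexp_const: "iexp F k (\<lambda>_. c) = c"
  by (induction k) simp_all

lemma iexp_binary_env_mono:
  assumes "0 \<le> \<sigma>" "\<sigma> \<le> 1" and "\<And>xs. set xs \<subseteq> {0, z} \<Longrightarrow> g xs \<le> g' xs"
  shows "iexp (binary_env z \<sigma>) k g \<le> iexp (binary_env z \<sigma>) k g'"
  using assms(3)
proof (induction k arbitrary: g g')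
  case 0
  then show ?case by simp
next
  case (Suc k)
  have "iexp (binary_env z \<sigma>) k (\<lambda>xs. g (y # xs)) \<le> iexp (binary_env z \<sigma>) k (\<lambda>xs. g' (y # xs))"
    if "y \<in> {0, z}" for y
    using that by (intro Suc.IH Suc.prems) auto
  then show ?case
    using assms(1,2)
    by (simp only: iexp_binary_env_Suc[OF assms(1,2)]) (simp add: add_mono mult_left_mono)
qed

definition stop_gain :: "(real list \<Rightarrow> real) \<Rightarrow> real list \<Rightarrow> nat \<Rightarrow> real list \<Rightarrow> real" where
  "stop_gain p h k xs = (\<Prod>j<k. 1 - p (h @ take j xs)) * p (h @ xs) * best (h @ xs)"

definition payoff_term :: "real \<Rightarrow> (real list \<Rightarrow> real) \<Rightarrow> real pmf \<Rightarrow> real list \<Rightarrow> nat \<Rightarrow> real" where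
  "payoff_term \<delta> p F h k = \<delta> ^ k * iexp F k (stop_gain p h k)"

lemma payoff_eq_suminf: "payoff \<delta> p F h = (\<Sum>k. payoff_term \<delta> p F h k)"
  unfolding payoff_def payoff_term_def stop_gain_def ..

lemma payoff_term_0: "payoff_term \<delta> p F h 0 = p h * best h"
  unfolding payoff_term_def stop_gain_def by simp

lemma stop_gain_Suc_Cons: "stop_gain p h (Suc k) (x # xs) = (1 - p h) * stop_gain p (h @ [x]) k xs"
  unfolding stop_gain_def prod.lessThan_Suc_shift by (simp del: prod.lessThan_Suc)

lemma payoff_term_binary_env_Suc:
  assumes "0 \<le> \<sigma>" "\<sigma> \<le> 1"
  shows "payoff_term \<delta> p (binary_env z \<sigma>) h (Suc k) = (1 - p h) * \<delta> *
    ((1 - \<sigma>) * payoff_term \<delta> p (binary_env z \<sigma>) (h @ [0]) k + \<sigma> * payoff_term \<delta> p (binary_env z \<sigma>) (h @ [z]) k)"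
  unfolding payoff_term_def
  by (simp only: iexp_binary_env_Suc[OF assms] stop_gain_Suc_Cons iexp_mult_left power_Suc)
    (simp add: algebra_simps)

definition nonneg_hist :: "real list \<Rightarrow> bool" where
  "nonneg_hist h \<longleftrightarrow> h \<noteq> [] \<and> (\<forall>y\<in>set h. 0 \<le> y)"

lemma nonneg_hist_append:
  "nonneg_hist h \<Longrightarrow> \<forall>y\<in>set xs. 0 \<le> y \<Longrightarrow> nonneg_hist (h @ xs)"
  unfolding nonneg_hist_def by auto

lemma best_snoc: "h \<noteq> [] \<Longrightarrow> best (h @ [y]) = max (best h) y"
  unfolding best_def by (simp add: max.commute)

lemma le_best: "y \<in> set h \<Longrightarrow> y \<le> best h"
  unfolding best_def by simp

lemma best_mem: "h \<noteq> [] \<Longrightarrow> best h \<in> set h"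
  unfolding best_def by simp

lemma best_nonneg: "nonneg_hist h \<Longrightarrow> 0 \<le> best h"
  unfolding nonneg_hist_def using best_mem by blast

lemma best_Cons_zeros:
  assumes "set zs \<subseteq> {0}" "0 \<le> y"
  shows "best (y # zs @ xs) = best (y # xs)"
proof (cases "zs = []")
  case False
  then have "set zs = {0}"
    using assms(1) by (simp add: subset_singleton_iff)
  then have "set (y # zs @ xs) = insert 0 (set (y # xs))"
    by auto
  moreover have "0 \<le> best (y # xs)"
    using assms(2) le_best[of y "y # xs"] by simp
  ultimately show ?thesis
    unfolding best_def by simp
qed simp

lemma stop_gain_bounds:
  assumes p: "p \<in> decision_rules" and h: "nonneg_hist h" and xs: "set xs \<subseteq> {0, z}" and z: "0 \<le> z"
  shows "0 \<le> stop_gain p h k xs" and "stop_gain p h k xs \<le> max (best h) z"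
proof -
  have p01: "0 \<le> p g" "p g \<le> 1" for g
    using p unfolding decision_rules_def by auto
  have P: "0 \<le> (\<Prod>j<k. 1 - p (h @ take j xs))" "(\<Prod>j<k. 1 - p (h @ take j xs)) \<le> 1"
    using p01 by (auto intro: prod_nonneg prod_le_1)
  have hxs: "nonneg_hist (h @ xs)"
    using nonneg_hist_append[OF h] xs z by auto
  have "y \<le> max (best h) z" if "y \<in> set (h @ xs)" for y
    using that xs le_best[of y h] best_nonneg[OF h] by auto
  then have B: "0 \<le> best (h @ xs)" "best (h @ xs) \<le> max (best h) z"
    using best_nonneg[OF hxs] best_mem[of "h @ xs"] hxs unfolding nonneg_hist_def by auto
  show "0 \<le> stop_gain p h k xs"
    unfolding stop_gain_def using P p01 B by simp
  have "stop_gain p h k xs \<le> 1 * 1 * best (h @ xs)"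
    unfolding stop_gain_def using P p01 B by (intro mult_mono) auto
  with B show "stop_gain p h k xs \<le> max (best h) z" by simp
qed

definition env_value :: "real \<Rightarrow> real pmf \<Rightarrow> real list \<Rightarrow> real" where
  "env_value \<delta> F h = (SUP p\<in>decision_rules. payoff \<delta> p F h)"

lemma always_stop_in_decision_rules: "(\<lambda>_. 1) \<in> decision_rules"
  unfolding decision_rules_def by simp

text \<open>The payoff of the rule that stops exactly when z appears:
  W = delta * (sigma * z + (1 - sigma) * W).\<close>
definition wait_value :: "real \<Rightarrow> real \<Rightarrow> real \<Rightarrow> real" where
  "wait_value \<delta> \<sigma> z = \<delta> * \<sigma> * z / (1 - \<delta> + \<delta> * \<sigma>)"

lemma wait_denom_pos: "0 \<le> \<delta> \<Longrightarrow> \<delta> < (1::real) \<Longrightarrow> 0 \<le> \<sigma> \<Longrightarrow> 0 < 1 - \<delta> + \<delta> * \<sigma>"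
  using mult_nonneg_nonneg[of \<delta> \<sigma>] by linarith

lemma wait_value_eq:
  assumes "0 \<le> \<delta>" "\<delta> < 1" "0 \<le> \<sigma>"
  shows "wait_value \<delta> \<sigma> z * (1 - \<delta> + \<delta> * \<sigma>) = \<delta> * \<sigma> * z"
  unfolding wait_value_def using wait_denom_pos[OF assms] by simp

lemma wait_value_le:
  assumes "0 \<le> \<delta>" "\<delta> < 1" "0 \<le> \<sigma>" "0 \<le> z"
  shows "wait_value \<delta> \<sigma> z \<le> z"
proof -
  have "\<delta> * \<sigma> * z \<le> (1 - \<delta> + \<delta> * \<sigma>) * z"
    using assms by (intro mult_right_mono) auto
  then show ?thesis
    unfolding wait_value_def using wait_denom_pos[OF assms(1-3)] by (simp add: divide_le_eq mult.commute)
qed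

lemma div_wait_value_le:
  assumes discount: "0 < \<delta>" "\<delta> < 1" and \<sigma>: "0 < \<sigma>" and \<kappa>: "0 \<le> \<kappa>" and z: "0 < z"
    and x0: "x0 / z \<le> x * (1 + \<kappa>)" and x: "0 \<le> x"
  shows "x0 / wait_value \<delta> (\<sigma> / (1 + \<kappa>)) z \<le> (1 + \<kappa>)\<^sup>2 * (x * ((1 - \<delta>) / (\<delta> * \<sigma>) + 1))"
proof -
  have div_wait: "x0 / wait_value \<delta> s z = x0 / z * ((1 - \<delta>) / (\<delta> * s) + 1)" if "0 < s" for s
    unfolding wait_value_def using discount that z by (simp add: field_simps)
  have "x0 / wait_value \<delta> (\<sigma> / (1 + \<kappa>)) z = x0 / z * ((1 - \<delta>) / (\<delta> * (\<sigma> / (1 + \<kappa>))) + 1)"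
    by (rule div_wait) (use \<sigma> \<kappa> in simp)
  also have "(1 - \<delta>) / (\<delta> * (\<sigma> / (1 + \<kappa>))) = (1 + \<kappa>) * (1 - \<delta>) / (\<delta> * \<sigma>)"
    using \<kappa> by (simp add: field_simps)
  also have "x0 / z * ((1 + \<kappa>) * (1 - \<delta>) / (\<delta> * \<sigma>) + 1)
      \<le> x * (1 + \<kappa>) * ((1 + \<kappa>) * ((1 - \<delta>) / (\<delta> * \<sigma>) + 1))"
  proof (rule mult_mono)
    show "(1 + \<kappa>) * (1 - \<delta>) / (\<delta> * \<sigma>) + 1 \<le> (1 + \<kappa>) * ((1 - \<delta>) / (\<delta> * \<sigma>) + 1)"
      using \<kappa> by (simp add: algebra_simps)
    show "0 \<le> (1 + \<kappa>) * (1 - \<delta>) / (\<delta> * \<sigma>) + 1"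
      using \<kappa> \<sigma> discount by simp
  qed (use x0 x \<kappa> in auto)
  also have "\<dots> = (1 + \<kappa>)\<^sup>2 * (x * ((1 - \<delta>) / (\<delta> * \<sigma>) + 1))"
    unfolding power2_eq_square by (simp only: ac_simps)
  finally show ?thesis .
qed

context
  fixes \<delta> \<sigma> z :: real
  assumes discount: "0 \<le> \<delta>" "\<delta> < 1" and prob: "0 \<le> \<sigma>" "\<sigma> \<le> 1" and offer: "0 \<le> z"
begin

lemma payoff_term_bounds:
  assumes "p \<in> decision_rules" "nonneg_hist h"
  shows "0 \<le> payoff_term \<delta> p (binary_env z \<sigma>) h k"
    and "payoff_term \<delta> p (binary_env z \<sigma>) h k \<le> \<delta> ^ k * max (best h) z"
proof -
  note gain = stop_gain_bounds[OF assms _ offer]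
  have "iexp (binary_env z \<sigma>) k (\<lambda>_. 0) \<le> iexp (binary_env z \<sigma>) k (stop_gain p h k)"
    "iexp (binary_env z \<sigma>) k (stop_gain p h k) \<le> iexp (binary_env z \<sigma>) k (\<lambda>_. max (best h) z)"
    using gain by (auto intro!: iexp_binary_env_mono prob)
  then show "0 \<le> payoff_term \<delta> p (binary_env z \<sigma>) h k"
    and "payoff_term \<delta> p (binary_env z \<sigma>) h k \<le> \<delta> ^ k * max (best h) z"
    unfolding payoff_term_def iexp_const using discount by (simp_all add: mult_left_mono)
qed

lemma summable_payoff_term:
  assumes "p \<in> decision_rules" "nonneg_hist h"
  shows "summable (payoff_term \<delta> p (binary_env z \<sigma>) h)"
proof (rule summable_comparison_test)
  show "\<exists>N. \<forall>n\<ge>N. norm (payoff_term \<delta> p (binary_env z \<sigma>) h n) \<le> max (best h) z * \<delta> ^ n"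
    using payoff_term_bounds[OF assms] by (auto simp: mult.commute)
  show "summable (\<lambda>n. max (best h) z * \<delta> ^ n)"
    using discount by (simp add: summable_mult)
qed

lemma payoff_nonneg:
  assumes "p \<in> decision_rules" "nonneg_hist h"
  shows "0 \<le> payoff \<delta> p (binary_env z \<sigma>) h"
  unfolding payoff_eq_suminf
  using summable_payoff_term[OF assms] payoff_term_bounds(1)[OF assms] by (rule suminf_nonneg)

lemma payoff_binary_env_rec:
  assumes p: "p \<in> decision_rules" and h: "nonneg_hist h"
  shows "payoff \<delta> p (binary_env z \<sigma>) h = p h * best h + (1 - p h) * \<delta> *
    ((1 - \<sigma>) * payoff \<delta> p (binary_env z \<sigma>) (h @ [0]) + \<sigma> * payoff \<delta> p (binary_env z \<sigma>) (h @ [z]))"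
proof -
  let ?U = "payoff \<delta> p (binary_env z \<sigma>)" and ?t = "payoff_term \<delta> p (binary_env z \<sigma>)"
  have "?t (h @ [y]) sums ?U (h @ [y])" if "0 \<le> y" for y
    unfolding payoff_eq_suminf
    using that by (intro summable_sums summable_payoff_term p nonneg_hist_append h) auto
  then have "(\<lambda>k. (1 - p h) * \<delta> * ((1 - \<sigma>) * ?t (h @ [0]) k + \<sigma> * ?t (h @ [z]) k)) sums
      ((1 - p h) * \<delta> * ((1 - \<sigma>) * ?U (h @ [0]) + \<sigma> * ?U (h @ [z])))"
    using offer by (intro sums_mult sums_add) auto
  then have "(\<lambda>k. ?t h (Suc k)) sums ((1 - p h) * \<delta> * ((1 - \<sigma>) * ?U (h @ [0]) + \<sigma> * ?U (h @ [z])))"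
    by (simp only: payoff_term_binary_env_Suc[OF prob])
  then have "?t h sums ((1 - p h) * \<delta> * ((1 - \<sigma>) * ?U (h @ [0]) + \<sigma> * ?U (h @ [z])) + p h * best h)"
    by (simp only: sums_Suc_iff payoff_term_0)
  then show ?thesis
    unfolding payoff_eq_suminf[of \<delta> p _ h] by (simp add: sums_iff)
qed

lemma payoff_stop:
  assumes "p \<in> decision_rules" "nonneg_hist h" "p h = 1"
  shows "payoff \<delta> p (binary_env z \<sigma>) h = best h"
  using payoff_binary_env_rec[OF assms(1,2)] assms(3) by simp

lemma bellman_step_le_max_wait:
  assumes b: "0 \<le> b" and a: "0 \<le> a" "a \<le> 1"
    and S0: "S0 \<le> max b (wait_value \<delta> \<sigma> z)" and Sz: "Sz \<le> max (max b z) (wait_value \<delta> \<sigma> z)"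
  shows "a * b + (1 - a) * \<delta> * ((1 - \<sigma>) * S0 + \<sigma> * Sz) \<le> max b (wait_value \<delta> \<sigma> z)"
proof -
  define W where "W = wait_value \<delta> \<sigma> z"
  define M where "M = max b W"
  have "(1 - \<sigma>) * S0 + \<sigma> * Sz \<le> (1 - \<sigma>) * M + \<sigma> * max (max b z) W"
    using S0 Sz prob unfolding M_def W_def by (intro add_mono mult_left_mono) auto
  also have "\<delta> * \<dots> \<le> M"
  proof (cases "z \<le> b")
    case True
    then show ?thesis
      using discount b by (simp add: M_def algebra_simps mult_left_le_one_le)
  next
    case False
    then have "max (max b z) W = z"
      using wait_value_le[OF discount prob(1) offer] unfolding W_def by simp
    then have "\<delta> * ((1 - \<sigma>) * M + \<sigma> * max (max b z) W) = \<delta> * (1 - \<sigma>) * M + W * (1 - \<delta> + \<delta> * \<sigma>)"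
      using wait_value_eq[OF discount prob(1)] unfolding W_def by (simp add: algebra_simps)
    also have "\<dots> \<le> \<delta> * (1 - \<sigma>) * M + M * (1 - \<delta> + \<delta> * \<sigma>)"
      using wait_denom_pos[OF discount prob(1)] by (intro add_left_mono mult_right_mono) (auto simp: M_def)
    also have "\<dots> = M"
      by (simp add: algebra_simps)
    finally show ?thesis .
  qed
  finally have "(1 - a) * (\<delta> * ((1 - \<sigma>) * S0 + \<sigma> * Sz)) \<le> (1 - a) * M"
    using discount a by (intro mult_left_mono) (auto intro: order_trans[OF mult_left_mono])
  then have "a * b + (1 - a) * \<delta> * ((1 - \<sigma>) * S0 + \<sigma> * Sz) \<le> a * M + (1 - a) * M"
    using a by (intro add_mono mult_left_mono) (auto simp: M_def mult.assoc)
  then show ?thesis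
    unfolding M_def W_def by (simp add: algebra_simps)
qed

lemma payoff_le_max_best_wait:
  assumes p: "p \<in> decision_rules" and h: "nonneg_hist h"
  shows "payoff \<delta> p (binary_env z \<sigma>) h \<le> max (best h) (wait_value \<delta> \<sigma> z)"
proof -
  let ?t = "payoff_term \<delta> p (binary_env z \<sigma>)"
  have p01: "0 \<le> p g" "p g \<le> 1" for g
    using p unfolding decision_rules_def by auto
  have "\<forall>h. nonneg_hist h \<longrightarrow> (\<Sum>k<n. ?t h k) \<le> max (best h) (wait_value \<delta> \<sigma> z)" for n
  proof (induction n)
    case 0
    show ?case
      using best_nonneg by (auto simp: le_max_iff_disj)
  next
    case (Suc n)
    show ?case
    proof (intro allI impI)
      fix h
      assume h: "nonneg_hist h"
      then have "h \<noteq> []" "0 \<le> best h"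
        using best_nonneg unfolding nonneg_hist_def by auto
      moreover have "nonneg_hist (h @ [0])" "nonneg_hist (h @ [z])"
        using h offer by (auto intro: nonneg_hist_append)
      ultimately have IH: "(\<Sum>k<n. ?t (h @ [0]) k) \<le> max (best h) (wait_value \<delta> \<sigma> z)"
          "(\<Sum>k<n. ?t (h @ [z]) k) \<le> max (max (best h) z) (wait_value \<delta> \<sigma> z)"
        using Suc.IH best_snoc[of h] by auto
      have "(\<Sum>k<Suc n. ?t h k) = p h * best h + (1 - p h) * \<delta> *
          ((1 - \<sigma>) * (\<Sum>k<n. ?t (h @ [0]) k) + \<sigma> * (\<Sum>k<n. ?t (h @ [z]) k))"
        by (simp only: sum.lessThan_Suc_shift payoff_term_0 payoff_term_binary_env_Suc[OF prob]
            sum_distrib_left sum.distrib[symmetric])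
      also have "\<dots> \<le> max (best h) (wait_value \<delta> \<sigma> z)"
        using \<open>0 \<le> best h\<close> p01 IH by (rule bellman_step_le_max_wait)
      finally show "(\<Sum>k<Suc n. ?t h k) \<le> max (best h) (wait_value \<delta> \<sigma> z)" .
    qed
  qed
  then show ?thesis
    unfolding payoff_eq_suminf using h by (intro suminf_le_const summable_payoff_term p) auto
qed

lemma payoff_le_env_value:
  assumes "p \<in> decision_rules" "nonneg_hist h"
  shows "payoff \<delta> p (binary_env z \<sigma>) h \<le> env_value \<delta> (binary_env z \<sigma>) h"
  unfolding env_value_def
  using assms payoff_le_max_best_wait[OF _ assms(2)] by (intro cSUP_upper bdd_aboveI2) auto

lemma env_value_le_max_best_wait:
  assumes "nonneg_hist h"
  shows "env_value \<delta> (binary_env z \<sigma>) h \<le> max (best h) (wait_value \<delta> \<sigma> z)"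
  unfolding env_value_def
  using always_stop_in_decision_rules payoff_le_max_best_wait[OF _ assms] by (intro cSUP_least) auto

lemma best_le_env_value:
  assumes "nonneg_hist h"
  shows "best h \<le> env_value \<delta> (binary_env z \<sigma>) h"
  using payoff_le_env_value[OF always_stop_in_decision_rules assms]
    payoff_stop[OF always_stop_in_decision_rules assms] by simp

end

lemma payoff_cong:
  assumes "\<And>xs. p (h @ xs) = p' (h' @ xs)" and "\<And>xs. best (h @ xs) = best (h' @ xs)"
  shows "payoff \<delta> p F h = payoff \<delta> p' F h'"
  unfolding payoff_def using assms by simp

section \<open>The stationary rule\<close>

lemma stationary_rule_in_decision_rules: "0 \<le> q \<Longrightarrow> q \<le> 1 \<Longrightarrow> stationary_rule q \<in> decision_rules"
  unfolding decision_rules_def stationary_rule_def by auto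

lemma payoff_stationary_rule_zeros:
  assumes "set zs \<subseteq> {0}" "0 \<le> y"
  shows "payoff \<delta> (stationary_rule q) F (y # zs) = payoff \<delta> (stationary_rule q) F [y]"
  by (rule payoff_cong) (use assms best_Cons_zeros in \<open>auto simp: stationary_rule_def\<close>)

lemma payoff_stationary_no_offer_rec:
  assumes "0 \<le> q" "q \<le> 1" "0 \<le> \<delta>" "\<delta> < 1" "0 \<le> x0"
  shows "payoff \<delta> (stationary_rule q) (binary_env 0 0) [x0]
    = q * x0 + (1 - q) * (\<delta> * payoff \<delta> (stationary_rule q) (binary_env 0 0) [x0])"
  using payoff_binary_env_rec[of \<delta> 0 0 "stationary_rule q" "[x0]"] assms
    payoff_stationary_rule_zeros[of "[0]" x0 \<delta> q "binary_env 0 0"] stationary_rule_in_decision_rules[of q]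
  by (simp add: nonneg_hist_def stationary_rule_def best_def)

lemma payoff_stationary_offer_rec:
  assumes q: "0 \<le> q" "q \<le> 1" and discount: "0 \<le> \<delta>" "\<delta> < 1" and prob: "0 \<le> \<sigma>" "\<sigma> \<le> 1"
    and x0: "0 \<le> x0" and z: "0 < z"
  shows "payoff \<delta> (stationary_rule q) (binary_env z \<sigma>) [x0]
    = q * x0 + (1 - q) * (\<delta> * ((1 - \<sigma>) * payoff \<delta> (stationary_rule q) (binary_env z \<sigma>) [x0] + \<sigma> * max x0 z))"
proof -
  let ?U = "payoff \<delta> (stationary_rule q) (binary_env z \<sigma>)"
  have rule: "stationary_rule q \<in> decision_rules"
    using q by (rule stationary_rule_in_decision_rules)
  have "?U [x0, z] = best [x0, z]"
    using payoff_stop[OF discount prob _ rule] x0 z by (simp add: nonneg_hist_def stationary_rule_def)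
  moreover have "?U [x0, 0] = ?U [x0]"
    using payoff_stationary_rule_zeros[of "[0]" x0] x0 by simp
  ultimately show ?thesis
    using payoff_binary_env_rec[OF discount prob _ rule, where h = "[x0]"] x0 z
    by (simp add: nonneg_hist_def stationary_rule_def best_def)
qed

lemma payoff_wait_for_offer:
  assumes discount: "0 \<le> \<delta>" "\<delta> < 1" and prob: "0 \<le> \<sigma>" "\<sigma> \<le> 1" and x0: "0 \<le> x0" "x0 \<le> z"
    and z: "0 < z"
  shows "payoff \<delta> (stationary_rule 0) (binary_env z \<sigma>) [x0] = wait_value \<delta> \<sigma> z"
proof -
  let ?U = "payoff \<delta> (stationary_rule 0) (binary_env z \<sigma>) [x0]"
  have "?U * (1 - \<delta> + \<delta> * \<sigma>) = \<delta> * \<sigma> * z"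
    using payoff_stationary_offer_rec[of 0, OF _ _ discount prob x0(1) z] x0(2)
    by (simp add: algebra_simps)
  then show ?thesis
    unfolding wait_value_def using wait_denom_pos[OF discount prob(1)] by (simp add: eq_divide_eq)
qed

section \<open>The ratio rho and the stopping probability q*\<close>

lemma rho_root: "0 \<le> x \<Longrightarrow> (2 * rho x - 1)\<^sup>2 = rho x * x"
  unfolding rho_def by (simp add: power2_eq_square algebra_simps)

lemma rho_gt_half: "0 < x \<Longrightarrow> 1/2 < rho x"
  unfolding rho_def by (simp add: add_pos_nonneg)

lemma rho_le_one: "0 \<le> x \<Longrightarrow> x \<le> 1 \<Longrightarrow> rho x \<le> 1"
proof -
  assume x: "0 \<le> x" "x \<le> 1"
  then have "sqrt (x * (x + 8)) \<le> sqrt ((4 - x)\<^sup>2)"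
    by (intro real_sqrt_le_mono) (simp add: power2_eq_square algebra_simps)
  then have "sqrt (x * (x + 8)) \<le> 4 - x"
    using x by simp
  then show ?thesis
    unfolding rho_def by (simp add: field_simps)
qed

lemma rho_mono: "0 \<le> x \<Longrightarrow> x \<le> y \<Longrightarrow> rho x \<le> rho y"
proof -
  assume "0 \<le> x" "x \<le> y"
  then have "sqrt (x * (x + 8)) \<le> sqrt (y * (y + 8))"
    by (intro real_sqrt_le_mono mult_mono) auto
  with \<open>x \<le> y\<close> have "(x + sqrt (x * (x + 8))) / 8 \<le> (y + sqrt (y * (y + 8))) / 8"
    by (intro divide_right_mono add_mono) auto
  then show ?thesis
    unfolding rho_def by (rule add_left_mono)
qed

lemma rho_threshold:
  assumes "0 \<le> \<delta>" "\<delta> < 2"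
  shows "rho (\<delta>\<^sup>2 / (2 - \<delta>)) = 1 / (2 - \<delta>)"
proof -
  have "\<delta>\<^sup>2 / (2 - \<delta>) * (\<delta>\<^sup>2 / (2 - \<delta>) + 8) = (\<delta> * (4 - \<delta>) / (2 - \<delta>))\<^sup>2"
    using assms by (simp add: field_simps power2_eq_square)
  then have "sqrt (\<delta>\<^sup>2 / (2 - \<delta>) * (\<delta>\<^sup>2 / (2 - \<delta>) + 8)) = \<delta> * (4 - \<delta>) / (2 - \<delta>)"
    using assms by simp
  then show ?thesis
    unfolding rho_def using assms by (simp add: field_simps power2_eq_square)
qed

context
  fixes x \<delta> :: real
  assumes x: "0 < x" "x \<le> 1" and discount: "0 < \<delta>" "\<delta> < 1"
begin

lemma q_star_denom_ge: "2 * (1 - \<delta>) \<le> 4 - 2 * \<delta> + x - sqrt (x * (x + 8))"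
proof -
  have "sqrt (x * (x + 8)) \<le> sqrt ((x + 2)\<^sup>2)"
    using x by (intro real_sqrt_le_mono) (simp add: power2_eq_square algebra_simps)
  then show ?thesis
    using x by simp
qed

lemma q_star_pos: "0 < q_star \<delta> x"
  unfolding q_star_def using q_star_denom_ge discount by simp

lemma q_star_le_one: "q_star \<delta> x \<le> 1"
  unfolding q_star_def using q_star_denom_ge discount by (simp add: divide_le_eq)

text \<open>Equivalently q* * (1 - rho x * delta) = rho x * (1 - delta); this is how q* is determined by rho.\<close>
lemma q_star_combination:
  "(1 - rho x * \<delta>) * (q_star \<delta> x * a + (1 - q_star \<delta> x) * c) = rho x * (1 - \<delta>) * a + (1 - rho x) * c"
proof -
  define s where "s = sqrt (x * (x + 8))"
  have s2: "s * s = x * (x + 8)"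
    unfolding s_def using x by simp
  have den: "0 < 4 - 2 * \<delta> + x - s"
    using q_star_denom_ge discount unfolding s_def by simp
  have rho_s: "rho x = (4 + x + s) / 8"
    unfolding rho_def s_def by simp
  have "(4 + x + s) * (4 - 2 * \<delta> + x - s) = 16 - 2 * \<delta> * (4 + x + s) + (x * (x + 8) - s * s)"
    by (simp add: algebra_simps)
  then have k: "rho x * (4 - 2 * \<delta> + x - s) = 2 * (1 - rho x * \<delta>)"
    unfolding rho_s s2 by (simp add: field_simps)
  have "q_star \<delta> x * (1 - rho x * \<delta>) = (1 - \<delta>) * (2 * (1 - rho x * \<delta>)) / (4 - 2 * \<delta> + x - s)"
    unfolding q_star_def s_def[symmetric] by (simp add: algebra_simps)
  also have "\<dots> = (1 - \<delta>) * (rho x * (4 - 2 * \<delta> + x - s)) / (4 - 2 * \<delta> + x - s)"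
    unfolding k ..
  also have "\<dots> = rho x * (1 - \<delta>)"
    using den by simp
  finally have q_rho: "q_star \<delta> x * (1 - rho x * \<delta>) = rho x * (1 - \<delta>)" .
  have "(1 - rho x * \<delta>) * (q_star \<delta> x * a + (1 - q_star \<delta> x) * c)
      = q_star \<delta> x * (1 - rho x * \<delta>) * a + (1 - rho x * \<delta>) * c - q_star \<delta> x * (1 - rho x * \<delta>) * c"
    by (simp add: algebra_simps)
  then show ?thesis
    unfolding q_rho by (simp add: algebra_simps)
qed

text \<open>Because rho x solves (2 rho - 1)^2 = rho x, this expression is a perfect square.\<close>
lemma rho_gap_square:
  "(rho x * (1 - \<delta>) * x + (1 - rho x) * \<delta> * \<sigma>) * (1 - \<delta> + \<delta> * \<sigma>)
     - rho x * \<delta> * \<sigma> * (1 - \<delta> + (1 - rho x) * \<delta> * \<sigma>)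
   = ((1 - rho x) * \<delta> * \<sigma> - (1 - \<delta>) * (2 * rho x - 1))\<^sup>2"
proof -
  have "(rho x * (1 - \<delta>) * x + (1 - rho x) * \<delta> * \<sigma>) * (1 - \<delta> + \<delta> * \<sigma>)
      - rho x * \<delta> * \<sigma> * (1 - \<delta> + (1 - rho x) * \<delta> * \<sigma>)
      - ((1 - rho x) * \<delta> * \<sigma> - (1 - \<delta>) * (2 * rho x - 1))\<^sup>2
    = (rho x * x - (2 * rho x - 1)\<^sup>2) * ((1 - \<delta>) * (1 - \<delta> + \<delta> * \<sigma>))"
    by (simp add: algebra_simps power2_eq_square)
  then show ?thesis
    using rho_root[of x] x by simp
qed

lemma rho_gap_nonneg:
  "rho x * \<delta> * \<sigma> * (1 - \<delta> + (1 - rho x) * \<delta> * \<sigma>)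
     \<le> (rho x * (1 - \<delta>) * x + (1 - rho x) * \<delta> * \<sigma>) * (1 - \<delta> + \<delta> * \<sigma>)"
  using rho_gap_square[of \<sigma>] by (metis diff_ge_0_iff_ge zero_le_power2)

lemma payoff_stationary_no_offer:
  assumes "0 \<le> x0"
  shows "payoff \<delta> (stationary_rule (q_star \<delta> x)) (binary_env 0 0) [x0] = rho x * x0"
proof -
  let ?U = "payoff \<delta> (stationary_rule (q_star \<delta> x)) (binary_env 0 0) [x0]"
  have "(1 - rho x * \<delta>) * ?U = rho x * (1 - \<delta>) * x0 + (1 - rho x) * (\<delta> * ?U)"
    using payoff_stationary_no_offer_rec[OF _ q_star_le_one _ _ assms] q_star_pos discount
      q_star_combination by (metis less_imp_le)
  then have "(1 - \<delta>) * ?U = (1 - \<delta>) * (rho x * x0)"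
    by (simp add: algebra_simps)
  then show ?thesis
    using discount by simp
qed

lemma payoff_stationary_offer:
  assumes x0: "0 \<le> x0" and z: "0 < z" and prob: "0 \<le> \<sigma>" "\<sigma> \<le> 1"
  shows "payoff \<delta> (stationary_rule (q_star \<delta> x)) (binary_env z \<sigma>) [x0] * (1 - \<delta> + (1 - rho x) * \<delta> * \<sigma>)
    = rho x * (1 - \<delta>) * x0 + (1 - rho x) * \<delta> * \<sigma> * max x0 z"
proof -
  let ?U = "payoff \<delta> (stationary_rule (q_star \<delta> x)) (binary_env z \<sigma>) [x0]"
  have "(1 - rho x * \<delta>) * ?U = rho x * (1 - \<delta>) * x0 + (1 - rho x) * (\<delta> * ((1 - \<sigma>) * ?U + \<sigma> * max x0 z))"
    using payoff_stationary_offer_rec[OF _ q_star_le_one _ _ prob x0 z] q_star_pos discount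
      q_star_combination by (metis less_imp_le)
  then show ?thesis
    by (simp add: algebra_simps)
qed

lemma payoff_stationary_denom_pos: "0 \<le> \<sigma> \<Longrightarrow> 0 < 1 - \<delta> + (1 - rho x) * \<delta> * \<sigma>"
  using rho_le_one[of x] x discount by (simp add: add_pos_nonneg)

lemma payoff_stationary_ge_stop:
  assumes x0: "0 \<le> x0" and z: "0 < z" and prob: "0 \<le> \<sigma>" "\<sigma> \<le> 1"
  shows "rho x * x0 \<le> payoff \<delta> (stationary_rule (q_star \<delta> x)) (binary_env z \<sigma>) [x0]"
proof -
  let ?U = "payoff \<delta> (stationary_rule (q_star \<delta> x)) (binary_env z \<sigma>) [x0]"
  have \<rho>: "0 \<le> rho x" "rho x \<le> 1"
    using rho_gt_half[OF x(1)] rho_le_one x by auto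
  have "rho x * x0 * (1 - \<delta> + (1 - rho x) * \<delta> * \<sigma>)
      = rho x * (1 - \<delta>) * x0 + (1 - rho x) * \<delta> * \<sigma> * (rho x * x0)"
    by (simp add: algebra_simps)
  also have "\<dots> \<le> rho x * (1 - \<delta>) * x0 + (1 - rho x) * \<delta> * \<sigma> * max x0 z"
    using \<rho> discount prob x0
    by (intro add_left_mono mult_left_mono) (auto intro: order_trans[of _ x0] mult_left_le_one_le)
  also have "\<dots> = ?U * (1 - \<delta> + (1 - rho x) * \<delta> * \<sigma>)"
    using payoff_stationary_offer[OF x0 z prob] by simp
  finally show ?thesis
    using payoff_stationary_denom_pos[OF prob(1)] by simp
qed

lemma payoff_stationary_ge_wait:
  assumes x0: "0 \<le> x0" "x * z \<le> x0" "x0 < z" and prob: "0 \<le> \<sigma>" "\<sigma> \<le> 1"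
  shows "rho x * wait_value \<delta> \<sigma> z \<le> payoff \<delta> (stationary_rule (q_star \<delta> x)) (binary_env z \<sigma>) [x0]"
proof -
  let ?U = "payoff \<delta> (stationary_rule (q_star \<delta> x)) (binary_env z \<sigma>) [x0]"
  define D where "D = 1 - \<delta> + (1 - rho x) * \<delta> * \<sigma>"
  define P where "P = 1 - \<delta> + \<delta> * \<sigma>"
  have D: "0 < D" and P: "0 < P"
    unfolding D_def P_def using payoff_stationary_denom_pos[OF prob(1)] wait_denom_pos[of \<delta> \<sigma>] discount prob
    by auto
  have \<rho>: "0 \<le> rho x" "rho x \<le> 1"
    using rho_gt_half[OF x(1)] rho_le_one x by auto
  have "rho x * \<delta> * \<sigma> * z * D = z * (rho x * \<delta> * \<sigma> * D)"
    by (simp add: algebra_simps)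
  also have "\<dots> \<le> z * ((rho x * (1 - \<delta>) * x + (1 - rho x) * \<delta> * \<sigma>) * P)"
    using rho_gap_nonneg[of \<sigma>] x0 unfolding D_def P_def by (intro mult_left_mono) auto
  also have "\<dots> = (rho x * (1 - \<delta>) * (x * z) + (1 - rho x) * \<delta> * \<sigma> * z) * P"
    by (simp add: algebra_simps)
  also have "\<dots> \<le> (rho x * (1 - \<delta>) * x0 + (1 - rho x) * \<delta> * \<sigma> * z) * P"
    using x0 \<rho> discount P by (intro mult_right_mono add_right_mono mult_left_mono) auto
  also have "\<dots> = ?U * P * D"
    using payoff_stationary_offer[of x0 z \<sigma>] x0 prob unfolding D_def by simp
  finally have "rho x * \<delta> * \<sigma> * z \<le> ?U * P"
    using D by simp
  then show ?thesis
    unfolding wait_value_def P_def[symmetric] using P by (simp add: field_simps)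
qed

lemma payoff_stationary_lower_bound:
  assumes x0: "0 < x0" "x * z \<le> x0" and z: "0 < z" and prob: "0 \<le> \<sigma>" "\<sigma> \<le> 1"
  shows "rho x * max x0 (wait_value \<delta> \<sigma> z) \<le> payoff \<delta> (stationary_rule (q_star \<delta> x)) (binary_env z \<sigma>) [x0]"
proof (cases "z \<le> x0")
  case True
  then have "rho x * wait_value \<delta> \<sigma> z \<le> rho x * x0"
    using wait_value_le[of \<delta> \<sigma> z] rho_gt_half[OF x(1)] discount prob z by (intro mult_left_mono) auto
  then show ?thesis
    using payoff_stationary_ge_stop[OF less_imp_le[OF x0(1)] z prob] by (auto simp: max_def)
next
  case False
  then show ?thesis
    using payoff_stationary_ge_stop[OF less_imp_le[OF x0(1)] z prob]
      payoff_stationary_ge_wait[OF less_imp_le[OF x0(1)] x0(2) _ prob] by (auto simp: max_def)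
qed

end

text \<open>The offer probability at which the square in rho_gap_square vanishes.\<close>
definition worst_offer_prob :: "real \<Rightarrow> real \<Rightarrow> real" where
  "worst_offer_prob \<delta> x = (1 - \<delta>) * (2 * rho x - 1) / ((1 - rho x) * \<delta>)"

text \<open>The weight of the no-offer ratio in the potential of potential_step; it makes condition (ii)
  tight at the worst offer probability.\<close>
definition potential_weight :: "real \<Rightarrow> real \<Rightarrow> real" where
  "potential_weight \<delta> x = (1 - rho x) * (1 - \<delta> + \<delta> * worst_offer_prob \<delta> x) / ((1 - \<delta>) * rho x)"

context
  fixes x \<delta> :: real
  assumes x: "0 < x" "x \<le> \<delta>\<^sup>2 / (2 - \<delta>)" and discount: "0 < \<delta>" "\<delta> < 1"
begin

lemma small_ratio_lt_one: "x < 1"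
proof -
  have "\<delta>\<^sup>2 < 2 - \<delta>"
    using discount mult_strict_mono[of \<delta> 1 \<delta> 1] by (simp add: power2_eq_square)
  then have "\<delta>\<^sup>2 / (2 - \<delta>) < 1"
    using discount by simp
  then show ?thesis
    using x by linarith
qed

lemma rho_le_threshold: "rho x \<le> 1 / (2 - \<delta>)"
  using rho_mono[of x "\<delta>\<^sup>2 / (2 - \<delta>)"] rho_threshold[of \<delta>] x discount by simp

lemma rho_lt_one: "rho x < 1"
proof -
  have "1 / (2 - \<delta>) < 1"
    using discount by simp
  then show ?thesis
    using rho_le_threshold by linarith
qed

lemma worst_offer_prob_pos: "0 < worst_offer_prob \<delta> x"
  unfolding worst_offer_prob_def using rho_gt_half[OF x(1)] rho_lt_one discount by simp

lemma worst_offer_prob_le_one: "worst_offer_prob \<delta> x \<le> 1"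
proof -
  have "rho x * (2 - \<delta>) \<le> 1"
    using rho_le_threshold discount by (simp add: le_divide_eq)
  then show ?thesis
    unfolding worst_offer_prob_def using rho_lt_one discount
    by (simp add: divide_le_eq algebra_simps)
qed

lemma potential_weight_nonneg: "0 \<le> potential_weight \<delta> x"
  unfolding potential_weight_def using rho_gt_half[OF x(1)] rho_lt_one worst_offer_prob_pos discount
  by (simp add: add_pos_nonneg less_imp_le)

lemma potential_weight_mult:
  "potential_weight \<delta> x * (1 - \<delta>) * rho x = (1 - rho x) * (1 - \<delta> + \<delta> * worst_offer_prob \<delta> x)"
  unfolding potential_weight_def using rho_gt_half[OF x(1)] discount by simp

lemma worst_offer_identity:
  "potential_weight \<delta> x * (1 - rho x) + x * ((1 - \<delta>) / (\<delta> * worst_offer_prob \<delta> x) + 1) = rho x"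
proof -
  define \<sigma> where "\<sigma> = worst_offer_prob \<delta> x"
  define \<rho> where "\<rho> = rho x"
  define P where "P = 1 - \<delta> + \<delta> * \<sigma>"
  have \<rho>: "1/2 < \<rho>" "\<rho> < 1"
    unfolding \<rho>_def using rho_gt_half[OF x(1)] rho_lt_one by auto
  have \<sigma>: "0 < \<sigma>"
    unfolding \<sigma>_def using worst_offer_prob_pos .
  have "(1 - \<rho>) * \<delta> * \<sigma> = (1 - \<delta>) * (2 * \<rho> - 1)"
    unfolding \<sigma>_def worst_offer_prob_def \<rho>_def[symmetric] using \<rho> discount by simp
  then have gap: "(\<rho> * (1 - \<delta>) * x + (1 - \<rho>) * \<delta> * \<sigma>) * P = \<rho> * \<delta> * \<sigma> * (1 - \<delta> + (1 - \<rho>) * \<delta> * \<sigma>)"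
    using rho_gap_square[OF x(1) less_imp_le[OF small_ratio_lt_one] discount, of \<sigma>]
    unfolding \<rho>_def[symmetric] P_def by simp
  have "(1 - \<rho>)\<^sup>2 * \<delta> * \<sigma> * P + (1 - \<delta>) * \<rho> * x * P - \<rho>\<^sup>2 * (1 - \<delta>) * \<delta> * \<sigma>
      = (\<rho> * (1 - \<delta>) * x + (1 - \<rho>) * \<delta> * \<sigma>) * P - \<rho> * \<delta> * \<sigma> * (1 - \<delta> + (1 - \<rho>) * \<delta> * \<sigma>)"
    unfolding P_def by (simp add: algebra_simps power2_eq_square)
  then have num: "(1 - \<rho>)\<^sup>2 * \<delta> * \<sigma> * P + (1 - \<delta>) * \<rho> * x * P = \<rho>\<^sup>2 * (1 - \<delta>) * \<delta> * \<sigma>"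
    using gap by simp
  have "(1 - \<rho>) * P / ((1 - \<delta>) * \<rho>) * (1 - \<rho>) + x * ((1 - \<delta>) / (\<delta> * \<sigma>) + 1)
      = ((1 - \<rho>)\<^sup>2 * \<delta> * \<sigma> * P + (1 - \<delta>) * \<rho> * x * P) / ((1 - \<delta>) * \<rho> * \<delta> * \<sigma>)"
    using \<rho> \<sigma> discount unfolding P_def by (simp add: field_simps power2_eq_square)
  also have "\<dots> = \<rho>"
    unfolding num using \<rho> \<sigma> discount by (simp add: power2_eq_square)
  finally show ?thesis
    unfolding potential_weight_def \<rho>_def P_def \<sigma>_def .
qed

end

section \<open>A potential argument\<close>

lemma bounded_expanding_seq_nonpos:
  fixes D :: "nat \<Rightarrow> real"
  assumes "0 \<le> \<delta>" "\<delta> < 1" and expanding: "\<And>t. D t \<le> \<delta> * D (Suc t)" and bounded: "\<And>t. D t \<le> C"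
  shows "D 0 \<le> 0"
proof -
  have "D 0 \<le> \<delta> ^ n * D n" for n
  proof (induction n)
    case (Suc n)
    have "\<delta> ^ n * D n \<le> \<delta> ^ n * (\<delta> * D (Suc n))"
      using expanding assms(1) by (intro mult_left_mono) auto
    with Suc.IH show ?case
      by (simp add: algebra_simps)
  qed simp
  also have "\<delta> ^ n * D n \<le> \<delta> ^ n * max C 0" for n
    using bounded[of n] assms(1) by (intro mult_left_mono) auto
  finally have "D 0 \<le> \<delta> ^ n * max C 0" for n .
  moreover have "(\<lambda>n. \<delta> ^ n * max C 0) \<longlonglongrightarrow> 0"
    using assms(1,2) by (intro tendsto_mult_left_zero LIMSEQ_power_zero) simp
  ultimately show ?thesis
    by (intro LIMSEQ_le_const) auto
qed

text \<open>One round along the all-zero history: u is the payoff against the environment without offers,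
  v against the one offering z with probability sigma. Under (i) and (ii) the weighted excess of the
  two ratios over A and B grows by the factor 1 / delta.\<close>
lemma potential_step:
  fixes a x0 W \<delta> \<sigma> z \<gamma> A B u u' v v' :: real
  assumes a: "0 \<le> a" "a \<le> 1" and x0: "0 < x0" and W: "0 < W"
    and discount: "0 \<le> \<delta>" "\<delta> \<le> 1" and prob: "0 \<le> \<sigma>" "\<sigma> \<le> 1" and \<gamma>: "0 \<le> \<gamma>"
    and W_eq: "W * (1 - \<delta> + \<delta> * \<sigma>) = \<delta> * \<sigma> * z"
    and u: "u = a * x0 + (1 - a) * \<delta> * u'"
    and v: "v \<le> a * x0 + (1 - a) * \<delta> * ((1 - \<sigma>) * v' + \<sigma> * z)"
    and u': "A \<le> u' / x0" and v': "B \<le> v' / W"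
    and i: "\<gamma> * (1 - A) \<le> B - x0 / W"
    and ii: "(1 - B) * (1 - \<delta> + \<delta> * \<sigma>) \<le> \<gamma> * (1 - \<delta>) * A"
  shows "\<gamma> * (u / x0 - A) + (v / W - B) \<le> \<delta> * (\<gamma> * (u' / x0 - A) + (v' / W - B))"
proof -
  define U' where "U' = u' / x0"
  define V' where "V' = v' / W"
  have u_div: "u / x0 = a + (1 - a) * \<delta> * U'"
    unfolding u U'_def using x0 by (simp add: field_simps)
  have "v / W \<le> (a * x0 + (1 - a) * \<delta> * ((1 - \<sigma>) * v' + \<sigma> * z)) / W"
    using v W by (simp add: divide_right_mono)
  also have "\<dots> = a * (x0 / W) + (1 - a) * \<delta> * (1 - \<sigma>) * V' + (1 - a) * (\<delta> * \<sigma> * z / W)"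
    unfolding V'_def using W by (simp add: field_simps)
  also have "\<delta> * \<sigma> * z / W = 1 - \<delta> + \<delta> * \<sigma>"
    using W_eq W by (simp add: field_simps)
  finally have v_div: "v / W \<le> a * (x0 / W) + (1 - a) * \<delta> * (1 - \<sigma>) * V' + (1 - a) * (1 - \<delta> + \<delta> * \<sigma>)" .
  have U'_ge: "0 \<le> U' - A" and V'_ge: "0 \<le> V' - B"
    using u' v' unfolding U'_def V'_def by auto
  have "\<gamma> * (u / x0 - A) + (v / W - B)
      \<le> a * (\<gamma> + x0 / W - \<gamma> * A - B) + (1 - a) * (\<gamma> * \<delta> * (U' - A) + \<delta> * (1 - \<sigma>) * (V' - B)
        + ((1 - B) * (1 - \<delta> + \<delta> * \<sigma>) - \<gamma> * (1 - \<delta>) * A))"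
    using v_div unfolding u_div by (simp add: algebra_simps)
  also have "\<dots> \<le> a * 0 + (1 - a) * (\<gamma> * \<delta> * (U' - A) + \<delta> * (V' - B) + 0)"
  proof (intro add_mono mult_left_mono)
    have "(1 - \<sigma>) * (V' - B) \<le> V' - B"
      using V'_ge prob by (simp add: mult_left_le_one_le)
    then show "\<delta> * (1 - \<sigma>) * (V' - B) \<le> \<delta> * (V' - B)"
      using discount by (simp add: mult_left_mono mult.assoc)
  qed (use a i ii \<gamma> discount in \<open>auto simp: algebra_simps\<close>)
  also have "\<dots> \<le> \<gamma> * \<delta> * (U' - A) + \<delta> * (V' - B)"
    using a U'_ge V'_ge \<gamma> discount by (simp add: mult_left_le_one_le)
  finally show ?thesis
    unfolding U'_def V'_def by (simp add: algebra_simps)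
qed

lemma potential_bound:
  fixes u v a :: "nat \<Rightarrow> real"
  assumes a: "\<And>t. 0 \<le> a t" "\<And>t. a t \<le> 1" and x0: "0 < x0" and W: "0 < W"
    and discount: "0 \<le> \<delta>" "\<delta> < 1" and prob: "0 \<le> \<sigma>" "\<sigma> \<le> 1" and \<gamma>: "0 \<le> \<gamma>"
    and W_eq: "W * (1 - \<delta> + \<delta> * \<sigma>) = \<delta> * \<sigma> * z"
    and u_rec: "\<And>t. u t = a t * x0 + (1 - a t) * \<delta> * u (Suc t)"
    and v_rec: "\<And>t. v t \<le> a t * x0 + (1 - a t) * \<delta> * ((1 - \<sigma>) * v (Suc t) + \<sigma> * z)"
    and u_bounds: "\<And>t. A * x0 \<le> u t" "\<And>t. u t \<le> Cu"
    and v_bounds: "\<And>t. B * W \<le> v t" "\<And>t. v t \<le> Cv"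
    and i: "\<gamma> * (1 - A) \<le> B - x0 / W"
    and ii: "(1 - B) * (1 - \<delta> + \<delta> * \<sigma>) \<le> \<gamma> * (1 - \<delta>) * A"
  shows "v 0 \<le> B * W"
proof -
  define D where "D t = \<gamma> * (u t / x0 - A) + (v t / W - B)" for t
  have u_ratio: "A \<le> u t / x0" and v_ratio: "B \<le> v t / W" for t
    using u_bounds(1)[of t] v_bounds(1)[of t] x0 W by (simp_all add: pos_le_divide_eq)
  have "D 0 \<le> 0"
  proof (rule bounded_expanding_seq_nonpos[OF discount])
    show "D t \<le> \<delta> * D (Suc t)" for t
      unfolding D_def using a discount
      by (intro potential_step[OF _ _ x0 W _ _ prob \<gamma> W_eq u_rec v_rec u_ratio v_ratio i ii]) auto
    show "D t \<le> \<gamma> * (Cu / x0 - A) + (Cv / W - B)" for t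
      unfolding D_def using u_bounds(2)[of t] v_bounds(2)[of t] x0 W \<gamma>
      by (intro add_mono mult_left_mono diff_right_mono divide_right_mono) auto
  qed
  moreover have "0 \<le> \<gamma> * (u 0 / x0 - A)"
    using u_ratio \<gamma> by simp
  ultimately have "v 0 / W \<le> B"
    unfolding D_def by linarith
  then show ?thesis
    using W by (simp add: pos_divide_le_eq)
qed

section \<open>Posteriors\<close>

lemma posterior_nonneg: "0 \<le> posterior \<mu> h F"
  unfolding posterior_def likelihood_def
  by (intro divide_nonneg_nonneg sum_nonneg mult_nonneg_nonneg prod_list_nonneg) auto

lemma sum_posterior:
  assumes "\<mu> \<in> consistent_priors Fs h"
  shows "(\<Sum>F\<in>set_pmf \<mu>. posterior \<mu> h F) = 1"
proof -
  have "finite (set_pmf \<mu>)" "\<forall>G\<in>set_pmf \<mu>. consistent G h"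
    using assms unfolding consistent_priors_def priors_def by auto
  then have "0 < (\<Sum>G\<in>set_pmf \<mu>. pmf \<mu> G * likelihood G h)"
    unfolding consistent_def by (intro sum_pos) (auto simp: pmf_positive set_pmf_not_empty)
  then show ?thesis
    unfolding posterior_def by (simp add: sum_divide_distrib[symmetric])
qed

lemma payoff_prior_return:
  assumes "consistent F h"
  shows "payoff_prior \<delta> p (return_pmf F) h = payoff \<delta> p F h"
  using assms unfolding payoff_prior_def posterior_def consistent_def by simp

lemma value_prior_return:
  assumes "consistent F h"
  shows "value_prior \<delta> (return_pmf F) h = env_value \<delta> F h"
  unfolding value_prior_def env_value_def payoff_prior_return[OF assms] ..

lemma value_prior_le_posterior_sum:
  assumes "\<And>F p. F \<in> set_pmf \<mu> \<Longrightarrow> p \<in> decision_rules \<Longrightarrow> payoff \<delta> p F h \<le> B F"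
  shows "value_prior \<delta> \<mu> h \<le> (\<Sum>F\<in>set_pmf \<mu>. posterior \<mu> h F * B F)"
  unfolding value_prior_def payoff_prior_def
  using always_stop_in_decision_rules assms posterior_nonneg
  by (intro cSUP_least sum_mono mult_left_mono) auto

section \<open>The performance ratio of the stationary rule\<close>

locale search_problem =
  fixes \<delta> :: real and X :: "real set" and x0 :: real
  assumes discount: "0 < \<delta>" "\<delta> < 1"
    and X_nonneg: "X \<subseteq> {0..}" and zero_mem_X: "0 \<in> X" and bdd_above_X: "bdd_above X"
    and x0_pos: "0 < x0" and x0_le_Sup: "x0 \<le> Sup X"
begin

abbreviation qbar :: "real list \<Rightarrow> real" where
  "qbar \<equiv> stationary_rule (q_star \<delta> (x0 / Sup X))"

abbreviation zero_hist :: "nat \<Rightarrow> real list" where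
  "zero_hist t \<equiv> x0 # replicate t 0"

lemma x0_ratio_bounds: "0 < x0 / Sup X" "x0 / Sup X \<le> 1"
  using x0_pos x0_le_Sup by auto

lemma x0_ratio_mult_le:
  assumes "z \<in> X"
  shows "x0 / Sup X * z \<le> x0"
proof -
  have "x0 * z \<le> x0 * Sup X"
    using assms x0_pos bdd_above_X by (intro mult_left_mono cSup_upper) auto
  then show ?thesis
    using x0_pos x0_le_Sup by (simp add: field_simps)
qed

lemma qbar_in_decision_rules: "qbar \<in> decision_rules"
  using q_star_pos q_star_le_one x0_ratio_bounds discount
  by (intro stationary_rule_in_decision_rules) (auto intro: less_imp_le)

lemma nonneg_hist_histories: "h \<in> histories X x0 \<Longrightarrow> nonneg_hist h"
  unfolding histories_def nonneg_hist_def using X_nonneg x0_pos by (auto simp: subset_iff)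

lemma binary_envs_payoff_bounds:
  assumes "F \<in> binary_envs X" "h \<in> histories X x0" "p \<in> decision_rules"
  shows "0 \<le> payoff \<delta> p F h" "payoff \<delta> p F h \<le> env_value \<delta> F h"
  using assms X_nonneg discount nonneg_hist_histories[OF assms(2)] payoff_nonneg payoff_le_env_value
  unfolding binary_envs_def by auto

lemma payoff_stationary_initial:
  assumes z: "z \<in> X" and prob: "0 \<le> \<sigma>" "\<sigma> \<le> 1"
  shows "rho (x0 / Sup X) * max x0 (wait_value \<delta> \<sigma> z) \<le> payoff \<delta> qbar (binary_env z \<sigma>) [x0]"
proof (cases "z = 0")
  case True
  then show ?thesis
    using payoff_stationary_no_offer[OF x0_ratio_bounds discount, of x0] binary_env_zero[of \<sigma>] x0_pos
    by (simp add: wait_value_def)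
next
  case False
  then show ?thesis
    using payoff_stationary_lower_bound[OF x0_ratio_bounds discount x0_pos x0_ratio_mult_le[OF z] _ prob]
      z X_nonneg by force
qed

text \<open>Once the offer z has appeared the rule has already stopped at the best alternative; before
  that, the history is irrelevant.\<close>
lemma stationary_ratio_binary_env:
  assumes F: "F \<in> binary_envs X" and h: "h \<in> histories X x0" and consistent: "consistent F h"
  shows "rho (x0 / Sup X) * env_value \<delta> F h \<le> payoff \<delta> qbar F h"
proof -
  obtain z \<sigma> where F_def: "F = binary_env z \<sigma>" and z: "z \<in> X" and prob: "0 \<le> \<sigma>" "\<sigma> \<le> 1"
    using F unfolding binary_envs_def by auto
  obtain xs where h_def: "h = x0 # xs"
    using h unfolding histories_def by auto
  have hist: "nonneg_hist h"
    using nonneg_hist_histories[OF h] .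
  have z0: "0 \<le> z"
    using z X_nonneg by auto
  have \<rho>: "0 \<le> rho (x0 / Sup X)" "rho (x0 / Sup X) \<le> 1"
    using rho_gt_half[OF x0_ratio_bounds(1)] rho_le_one x0_ratio_bounds by auto
  have "rho (x0 / Sup X) * env_value \<delta> F h \<le> rho (x0 / Sup X) * max (best h) (wait_value \<delta> \<sigma> z)"
    unfolding F_def using env_value_le_max_best_wait[of \<delta> \<sigma> z h] discount prob z0 hist \<rho>
    by (intro mult_left_mono) auto
  also have "\<dots> \<le> payoff \<delta> qbar F h"
  proof (cases "\<exists>y\<in>set xs. y \<noteq> 0")
    case True
    then obtain y where y: "y \<in> set xs" "y \<noteq> 0"
      by auto
    then have "y = z"
      using consistent_binary_env_values[OF consistent[unfolded F_def], of y] h_def by simp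
    then have "max (best h) (wait_value \<delta> \<sigma> z) = best h"
      using wait_value_le[of \<delta> \<sigma> z] prob z0 discount le_best[of y h] y h_def by auto
    moreover have "qbar h = 1"
      using y h_def by (auto simp: stationary_rule_def)
    then have "payoff \<delta> qbar F h = best h"
      unfolding F_def using payoff_stop[of \<delta> \<sigma> z qbar h] discount prob z0 qbar_in_decision_rules hist
      by simp
    ultimately show ?thesis
      using \<rho> best_nonneg[OF hist] by (simp add: mult_left_le_one_le)
  next
    case False
    then have zeros: "set xs \<subseteq> {0}"
      by auto
    then have "best h = x0"
      using best_Cons_zeros[OF zeros, of x0 "[]"] x0_pos h_def by (simp add: best_def)
    moreover have "payoff \<delta> qbar F h = payoff \<delta> qbar F [x0]"
      unfolding h_def using payoff_stationary_rule_zeros[OF zeros] x0_pos by simp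
    ultimately show ?thesis
      using payoff_stationary_initial[OF z prob] unfolding F_def by simp
  qed
  finally show ?thesis .
qed

lemma binary_envs_payoff_always_stop:
  assumes "F \<in> binary_envs X" "h \<in> histories X x0"
  shows "payoff \<delta> (\<lambda>_. 1) F h = best h"
  using assms X_nonneg discount nonneg_hist_histories[OF assms(2)]
    payoff_stop[OF _ _ _ _ _ always_stop_in_decision_rules]
  unfolding binary_envs_def by auto

lemma consistent_prior_support:
  assumes "\<mu> \<in> consistent_priors (binary_envs X) h" "F \<in> set_pmf \<mu>"
  shows "F \<in> binary_envs X" "consistent F h"
  using assms unfolding consistent_priors_def priors_def by auto

lemma value_prior_le_env_values:
  assumes "h \<in> histories X x0" "\<mu> \<in> consistent_priors (binary_envs X) h"
  shows "value_prior \<delta> \<mu> h \<le> (\<Sum>F\<in>set_pmf \<mu>. posterior \<mu> h F * env_value \<delta> F h)"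
  using binary_envs_payoff_bounds(2)[OF consistent_prior_support(1)[OF assms(2)] assms(1)]
  by (rule value_prior_le_posterior_sum)

lemma payoff_prior_bounds:
  assumes h: "h \<in> histories X x0" and \<mu>: "\<mu> \<in> consistent_priors (binary_envs X) h"
    and p: "p \<in> decision_rules"
  shows "0 \<le> payoff_prior \<delta> p \<mu> h" and "payoff_prior \<delta> p \<mu> h \<le> value_prior \<delta> \<mu> h"
proof -
  note env = binary_envs_payoff_bounds[OF consistent_prior_support(1)[OF \<mu>] h]
  show "0 \<le> payoff_prior \<delta> p \<mu> h"
    unfolding payoff_prior_def using env(1)[OF _ p] posterior_nonneg by (auto intro: sum_nonneg)
  have "payoff_prior \<delta> p' \<mu> h \<le> (\<Sum>F\<in>set_pmf \<mu>. posterior \<mu> h F * env_value \<delta> F h)"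
    if "p' \<in> decision_rules" for p'
    unfolding payoff_prior_def using env(2)[OF _ that] posterior_nonneg by (intro sum_mono mult_left_mono) auto
  then show "payoff_prior \<delta> p \<mu> h \<le> value_prior \<delta> \<mu> h"
    unfolding value_prior_def using p by (intro cSUP_upper bdd_aboveI2) auto
qed

lemma x0_le_value_prior:
  assumes h: "h \<in> histories X x0" and \<mu>: "\<mu> \<in> consistent_priors (binary_envs X) h"
  shows "x0 \<le> value_prior \<delta> \<mu> h"
proof -
  have "x0 \<le> best h"
    using h unfolding histories_def by (auto intro: le_best)
  also have "best h = payoff_prior \<delta> (\<lambda>_. 1) \<mu> h"
    unfolding payoff_prior_def
    using binary_envs_payoff_always_stop[OF consistent_prior_support(1)[OF \<mu>] h] sum_posterior[OF \<mu>]
    by (simp add: sum_distrib_right[symmetric])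
  also have "\<dots> \<le> value_prior \<delta> \<mu> h"
    using payoff_prior_bounds(2)[OF h \<mu> always_stop_in_decision_rules] .
  finally show ?thesis .
qed

lemma stationary_ratio_prior:
  assumes h: "h \<in> histories X x0" and \<mu>: "\<mu> \<in> consistent_priors (binary_envs X) h"
  shows "rho (x0 / Sup X) * value_prior \<delta> \<mu> h \<le> payoff_prior \<delta> qbar \<mu> h"
proof -
  have "rho (x0 / Sup X) * value_prior \<delta> \<mu> h
      \<le> rho (x0 / Sup X) * (\<Sum>F\<in>set_pmf \<mu>. posterior \<mu> h F * env_value \<delta> F h)"
    using value_prior_le_env_values[OF h \<mu>] rho_gt_half[OF x0_ratio_bounds(1)] by (intro mult_left_mono) auto
  also have "\<dots> = (\<Sum>F\<in>set_pmf \<mu>. posterior \<mu> h F * (rho (x0 / Sup X) * env_value \<delta> F h))"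
    by (simp add: sum_distrib_left algebra_simps)
  also have "\<dots> \<le> payoff_prior \<delta> qbar \<mu> h"
    unfolding payoff_prior_def using posterior_nonneg
      stationary_ratio_binary_env[OF consistent_prior_support(1)[OF \<mu>] h consistent_prior_support(2)[OF \<mu>]]
    by (intro sum_mono mult_left_mono) auto
  finally show ?thesis .
qed

lemma zero_hist_in_histories: "zero_hist t \<in> histories X x0"
  unfolding histories_def using zero_mem_X by auto

lemma no_offer_prior: "return_pmf (binary_env 0 0) \<in> consistent_priors (binary_envs X) (zero_hist t)"
  unfolding consistent_priors_def priors_def binary_envs_def consistent_def likelihood_def binary_env_def
  using zero_mem_X by force

lemma nonneg_zero_hist: "nonneg_hist (zero_hist t)"
  using nonneg_hist_histories[OF zero_hist_in_histories] .

lemma best_zero_hist: "best (zero_hist t) = x0"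
proof -
  have "set (replicate t (0::real)) \<subseteq> {0}"
    by auto
  then show ?thesis
    using best_Cons_zeros[of "replicate t 0" x0 "[]"] x0_pos by (simp add: best_def)
qed

lemma env_value_no_offer: "env_value \<delta> (binary_env 0 0) (zero_hist t) = x0"
proof (rule antisym)
  show "env_value \<delta> (binary_env 0 0) (zero_hist t) \<le> x0"
    using env_value_le_max_best_wait[of \<delta> 0 0 "zero_hist t"] nonneg_zero_hist best_zero_hist
      discount x0_pos by (simp add: wait_value_def)
  show "x0 \<le> env_value \<delta> (binary_env 0 0) (zero_hist t)"
    using best_le_env_value[of \<delta> 0 0 "zero_hist t"] nonneg_zero_hist best_zero_hist discount by simp
qed

abbreviation ratios :: "(real list \<Rightarrow> real) \<Rightarrow> real set" where
  "ratios p \<equiv> {payoff_prior \<delta> p \<mu> h / value_prior \<delta> \<mu> h | h \<mu>.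
     h \<in> histories X x0 \<and> \<mu> \<in> consistent_priors (binary_envs X) h}"

lemma ratios_nonempty: "ratios p \<noteq> {}"
  using zero_hist_in_histories no_offer_prior by blast

lemma ratios_nonneg:
  assumes "p \<in> decision_rules" "a \<in> ratios p"
  shows "0 \<le> a"
proof -
  obtain h \<mu> where "a = payoff_prior \<delta> p \<mu> h / value_prior \<delta> \<mu> h"
    and h: "h \<in> histories X x0" and \<mu>: "\<mu> \<in> consistent_priors (binary_envs X) h"
    using assms(2) by blast
  then show ?thesis
    using payoff_prior_bounds(1)[OF h \<mu> assms(1)] x0_le_value_prior[OF h \<mu>] x0_pos by simp
qed

lemma perf_ratio_le_ratio:
  assumes "p \<in> decision_rules" "h \<in> histories X x0" "\<mu> \<in> consistent_priors (binary_envs X) h"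
  shows "perf_ratio \<delta> X x0 (binary_envs X) p \<le> payoff_prior \<delta> p \<mu> h / value_prior \<delta> \<mu> h"
  unfolding perf_ratio_def using assms ratios_nonneg[OF assms(1)] by (intro cInf_lower bdd_belowI) blast+

lemma perf_ratio_nonneg: "p \<in> decision_rules \<Longrightarrow> 0 \<le> perf_ratio \<delta> X x0 (binary_envs X) p"
  unfolding perf_ratio_def using ratios_nonempty ratios_nonneg by (rule cInf_greatest)

theorem perf_ratio_stationary: "perf_ratio \<delta> X x0 (binary_envs X) qbar = rho (x0 / Sup X)"
proof (rule antisym)
  let ?\<mu> = "return_pmf (binary_env 0 0)"
  have "payoff_prior \<delta> qbar ?\<mu> [x0] / value_prior \<delta> ?\<mu> [x0] = rho (x0 / Sup X)"
    using no_offer_prior[of 0] env_value_no_offer[of 0] x0_pos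
      payoff_stationary_no_offer[OF x0_ratio_bounds discount, of x0]
    by (simp add: consistent_priors_def priors_def payoff_prior_return value_prior_return)
  then show "perf_ratio \<delta> X x0 (binary_envs X) qbar \<le> rho (x0 / Sup X)"
    using perf_ratio_le_ratio[OF qbar_in_decision_rules, of "[x0]" ?\<mu>]
      zero_hist_in_histories[of 0] no_offer_prior[of 0] by simp
  have "rho (x0 / Sup X) \<le> a" if ratio: "a \<in> ratios qbar" for a
  proof -
    obtain h \<mu> where a: "a = payoff_prior \<delta> qbar \<mu> h / value_prior \<delta> \<mu> h"
      and h: "h \<in> histories X x0" and \<mu>: "\<mu> \<in> consistent_priors (binary_envs X) h"
      using ratio by blast
    have "0 < value_prior \<delta> \<mu> h"
      using x0_le_value_prior[OF h \<mu>] x0_pos by simp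
    then show ?thesis
      unfolding a using stationary_ratio_prior[OF h \<mu>] by (simp add: pos_le_divide_eq)
  qed
  then show "rho (x0 / Sup X) \<le> perf_ratio \<delta> X x0 (binary_envs X) qbar"
    unfolding perf_ratio_def using ratios_nonempty by (intro cInf_greatest) auto
qed

section \<open>No rule does better for small outside options\<close>

lemma offer_prior:
  assumes "z \<in> X" "0 \<le> \<sigma>" "\<sigma> < 1"
  shows "return_pmf (binary_env z \<sigma>) \<in> consistent_priors (binary_envs X) (zero_hist t)"
proof -
  have "False \<in> set_pmf (bernoulli_pmf \<sigma>)"
    using assms by (simp add: set_pmf_iff)
  then have "0 \<in> set_pmf (binary_env z \<sigma>)"
    unfolding binary_env_def by force
  then have "consistent (binary_env z \<sigma>) (zero_hist t)"
    unfolding consistent_def likelihood_def by (simp add: pmf_positive prod_list_replicate)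
  moreover have "binary_env z \<sigma> \<in> binary_envs X"
    unfolding binary_envs_def using assms by (blast intro: less_imp_le)
  ultimately show ?thesis
    unfolding consistent_priors_def priors_def by simp
qed

lemma payoff_no_offer_zero_hist:
  assumes "p \<in> decision_rules"
  shows "payoff \<delta> p (binary_env 0 0) (zero_hist t)
    = p (zero_hist t) * x0 + (1 - p (zero_hist t)) * \<delta> * payoff \<delta> p (binary_env 0 0) (zero_hist (Suc t))"
  using payoff_binary_env_rec[of \<delta> 0 0 p "zero_hist t"] assms nonneg_zero_hist discount
  by (simp add: best_zero_hist replicate_append_same)

lemma payoff_offer_zero_hist:
  assumes p: "p \<in> decision_rules" and z: "x0 \<le> z" and prob: "0 \<le> \<sigma>" "\<sigma> \<le> 1"
  shows "payoff \<delta> p (binary_env z \<sigma>) (zero_hist t) \<le> p (zero_hist t) * x0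
    + (1 - p (zero_hist t)) * \<delta> * ((1 - \<sigma>) * payoff \<delta> p (binary_env z \<sigma>) (zero_hist (Suc t)) + \<sigma> * z)"
proof -
  have z0: "0 \<le> z"
    using z x0_pos by simp
  have "nonneg_hist (zero_hist t @ [z])"
    using nonneg_hist_append[OF nonneg_zero_hist] z0 by simp
  then have "payoff \<delta> p (binary_env z \<sigma>) (zero_hist t @ [z]) \<le> max (max x0 z) (wait_value \<delta> \<sigma> z)"
    using payoff_le_max_best_wait[of \<delta> \<sigma> z p "zero_hist t @ [z]"] best_snoc[of "zero_hist t" z]
      best_zero_hist discount prob z0 p by simp
  also have "\<dots> = z"
    using z wait_value_le[of \<delta> \<sigma> z] discount prob z0 by simp
  finally have "payoff \<delta> p (binary_env z \<sigma>) (zero_hist t @ [z]) \<le> z" .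
  moreover have "0 \<le> p (zero_hist t)" "p (zero_hist t) \<le> 1"
    using p unfolding decision_rules_def by auto
  ultimately show ?thesis
    using payoff_binary_env_rec[of \<delta> \<sigma> z p "zero_hist t"] nonneg_zero_hist discount prob z0 p
    by (simp add: best_zero_hist replicate_append_same mult_left_mono)
qed

lemma wait_value_le_env_value:
  assumes z: "x0 \<le> z" and prob: "0 \<le> \<sigma>" "\<sigma> \<le> 1"
  shows "wait_value \<delta> \<sigma> z \<le> env_value \<delta> (binary_env z \<sigma>) (zero_hist t)"
proof -
  have "set (replicate t (0::real)) \<subseteq> {0}"
    by auto
  then have "payoff \<delta> (stationary_rule 0) (binary_env z \<sigma>) (zero_hist t) = wait_value \<delta> \<sigma> z"
    using payoff_stationary_rule_zeros[of "replicate t 0" x0 \<delta> 0] payoff_wait_for_offer[of \<delta> \<sigma> x0 z]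
      discount prob x0_pos z by simp
  then show ?thesis
    using payoff_le_env_value[of \<delta> \<sigma> z "stationary_rule 0" "zero_hist t"] nonneg_zero_hist
      stationary_rule_in_decision_rules[of 0] discount prob z x0_pos by simp
qed

text \<open>Sup X need not be attained, so the worst case (offer Sup X with probability
  worst_offer_prob) is only approached.\<close>
lemma worst_case_offer:
  assumes small: "x0 / Sup X \<le> \<delta>\<^sup>2 / (2 - \<delta>)" and \<eta>: "0 < \<eta>"
  obtains z \<sigma> where "z \<in> X" "x0 < z" "0 < \<sigma>" "\<sigma> < 1" "\<sigma> \<le> worst_offer_prob \<delta> (x0 / Sup X)"
    and "x0 / wait_value \<delta> \<sigma> z
      \<le> x0 / Sup X * ((1 - \<delta>) / (\<delta> * worst_offer_prob \<delta> (x0 / Sup X)) + 1) + \<eta>"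
proof -
  define x where "x = x0 / Sup X"
  define \<sigma>s where "\<sigma>s = worst_offer_prob \<delta> x"
  define C where "C = x * ((1 - \<delta>) / (\<delta> * \<sigma>s) + 1)"
  have x: "0 < x" "x < 1"
    unfolding x_def using x0_ratio_bounds small_ratio_lt_one[OF _ small discount] by auto
  have \<sigma>s: "0 < \<sigma>s" "\<sigma>s \<le> 1"
    unfolding \<sigma>s_def x_def using worst_offer_prob_pos worst_offer_prob_le_one x0_ratio_bounds small discount
    by auto
  have C: "0 < C"
    unfolding C_def using x \<sigma>s discount by (intro mult_pos_pos add_nonneg_pos divide_nonneg_pos) auto
  define \<kappa> where "\<kappa> = min 1 (\<eta> / (3 * C))"
  have \<kappa>: "0 < \<kappa>" "\<kappa> \<le> 1" "3 * \<kappa> * C \<le> \<eta>"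
    unfolding \<kappa>_def using \<eta> C by (auto simp: min_def field_simps)
  define \<sigma> where "\<sigma> = \<sigma>s / (1 + \<kappa>)"
  have \<sigma>: "0 < \<sigma>" "\<sigma> < 1" "\<sigma> \<le> \<sigma>s"
    unfolding \<sigma>_def using \<sigma>s \<kappa> by (auto simp: field_simps)
  have Sup_pos: "0 < Sup X"
    using x0_pos x0_le_Sup by simp
  have "max x0 (Sup X / (1 + \<kappa>)) < Sup X"
    using x Sup_pos \<kappa> unfolding x_def by (auto simp: field_simps)
  then obtain z where z: "z \<in> X" "max x0 (Sup X / (1 + \<kappa>)) < z"
    using less_cSup_iff[of X] zero_mem_X bdd_above_X by blast
  then have z_pos: "0 < z"
    using x0_pos by simp
  have "x0 * Sup X \<le> x0 * ((1 + \<kappa>) * z)"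
    using z(2) x0_pos \<kappa> by (intro mult_left_mono) (auto simp: field_simps)
  then have "x0 / z \<le> x * (1 + \<kappa>)"
    unfolding x_def using z_pos Sup_pos by (simp add: field_simps)
  have "x0 / wait_value \<delta> \<sigma> z \<le> (1 + \<kappa>)\<^sup>2 * C"
    unfolding \<sigma>_def C_def using div_wait_value_le discount \<sigma>s \<kappa> z_pos \<open>x0 / z \<le> x * (1 + \<kappa>)\<close> x
    by simp
  also have "\<dots> \<le> (1 + 3 * \<kappa>) * C"
    using \<kappa> C by (intro mult_right_mono) (auto simp: power2_eq_square algebra_simps)
  also have "\<dots> \<le> C + \<eta>"
    using \<kappa> by (simp add: algebra_simps)
  finally show ?thesis
    using that z \<sigma> unfolding C_def \<sigma>s_def x_def by auto
qed

lemma perf_ratio_zero_hist_bounds: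
  assumes p: "p \<in> decision_rules" and z: "z \<in> X" "x0 \<le> z" and prob: "0 \<le> \<sigma>" "\<sigma> < 1"
  shows "perf_ratio \<delta> X x0 (binary_envs X) p * x0 \<le> payoff \<delta> p (binary_env 0 0) (zero_hist t)"
    and "perf_ratio \<delta> X x0 (binary_envs X) p * wait_value \<delta> \<sigma> z \<le> payoff \<delta> p (binary_env z \<sigma>) (zero_hist t)"
proof -
  let ?r = "perf_ratio \<delta> X x0 (binary_envs X) p"
  have consistent: "consistent (binary_env 0 0) (zero_hist t)" "consistent (binary_env z \<sigma>) (zero_hist t)"
    using consistent_prior_support(2)[OF no_offer_prior] consistent_prior_support(2)[OF offer_prior[OF z(1) prob]]
    by auto
  show "?r * x0 \<le> payoff \<delta> p (binary_env 0 0) (zero_hist t)"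
    using perf_ratio_le_ratio[OF p zero_hist_in_histories[of t] no_offer_prior[of t]] x0_pos
    by (simp add: payoff_prior_return value_prior_return consistent env_value_no_offer pos_le_divide_eq)
  let ?V = "env_value \<delta> (binary_env z \<sigma>) (zero_hist t)"
  have "0 < ?V"
    using best_le_env_value[of \<delta> \<sigma> z "zero_hist t"] best_zero_hist nonneg_zero_hist discount prob z x0_pos
    by simp
  then have "?r * ?V \<le> payoff \<delta> p (binary_env z \<sigma>) (zero_hist t)"
    using perf_ratio_le_ratio[OF p zero_hist_in_histories[of t] offer_prior[OF z(1) prob, of t]]
    by (simp add: payoff_prior_return value_prior_return consistent pos_le_divide_eq)
  moreover have "?r * wait_value \<delta> \<sigma> z \<le> ?r * ?V"
    using wait_value_le_env_value[OF z(2)] prob perf_ratio_nonneg[OF p] by (intro mult_left_mono) auto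
  ultimately show "?r * wait_value \<delta> \<sigma> z \<le> payoff \<delta> p (binary_env z \<sigma>) (zero_hist t)"
    by simp
qed

lemma zero_hist_potential_bound:
  assumes p: "p \<in> decision_rules" and z: "x0 < z" and prob: "0 < \<sigma>" "\<sigma> \<le> 1" and \<gamma>: "0 \<le> \<gamma>"
    and u_low: "\<And>t. A * x0 \<le> payoff \<delta> p (binary_env 0 0) (zero_hist t)"
    and v_low: "\<And>t. B * wait_value \<delta> \<sigma> z \<le> payoff \<delta> p (binary_env z \<sigma>) (zero_hist t)"
    and i: "\<gamma> * (1 - A) \<le> B - x0 / wait_value \<delta> \<sigma> z"
    and ii: "(1 - B) * (1 - \<delta> + \<delta> * \<sigma>) \<le> \<gamma> * (1 - \<delta>) * A"
  shows "payoff \<delta> p (binary_env z \<sigma>) (zero_hist 0) \<le> B * wait_value \<delta> \<sigma> z"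
proof (rule potential_bound[where a = "\<lambda>t. p (zero_hist t)", OF _ _ x0_pos _ _ _ _ _ \<gamma> _ _ _ u_low _ v_low _ i ii])
  let ?u = "\<lambda>t. payoff \<delta> p (binary_env 0 0) (zero_hist t)"
  let ?v = "\<lambda>t. payoff \<delta> p (binary_env z \<sigma>) (zero_hist t)"
  show "?u t = p (zero_hist t) * x0 + (1 - p (zero_hist t)) * \<delta> * ?u (Suc t)" for t
    by (rule payoff_no_offer_zero_hist[OF p])
  show "?v t \<le> p (zero_hist t) * x0 + (1 - p (zero_hist t)) * \<delta> * ((1 - \<sigma>) * ?v (Suc t) + \<sigma> * z)" for t
    using prob z by (intro payoff_offer_zero_hist[OF p]) auto
  show "?u t \<le> x0" for t
    using payoff_le_env_value[of \<delta> 0 0 p "zero_hist t"] env_value_no_offer nonneg_zero_hist p discount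
    by simp
  show "?v t \<le> max x0 (wait_value \<delta> \<sigma> z)" for t
    using payoff_le_max_best_wait[of \<delta> \<sigma> z p "zero_hist t"] best_zero_hist nonneg_zero_hist p discount prob z
      x0_pos by simp
  show "0 < wait_value \<delta> \<sigma> z"
    unfolding wait_value_def using discount prob z x0_pos wait_denom_pos[of \<delta> \<sigma>] by auto
  show "wait_value \<delta> \<sigma> z * (1 - \<delta> + \<delta> * \<sigma>) = \<delta> * \<sigma> * z"
    using wait_value_eq discount prob by simp
qed (use p discount prob in \<open>auto simp: decision_rules_def\<close>)

text \<open>A rule keeping its ratio above rho x + eta would, along the all-zero history, satisfy the
  hypotheses of zero_hist_potential_bound against the near worst-case offer, whose conclusion then
  caps its ratio against that offer at rho x + eta.\<close>
lemma perf_ratio_le_rho: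
  assumes small: "x0 / Sup X \<le> \<delta>\<^sup>2 / (2 - \<delta>)" and p: "p \<in> decision_rules"
  shows "perf_ratio \<delta> X x0 (binary_envs X) p \<le> rho (x0 / Sup X)"
proof (rule field_le_epsilon)
  fix \<eta> :: real
  assume \<eta>: "0 < \<eta>"
  define x where "x = x0 / Sup X"
  define r where "r = perf_ratio \<delta> X x0 (binary_envs X) p"
  have x: "0 < x" "x \<le> \<delta>\<^sup>2 / (2 - \<delta>)"
    unfolding x_def using x0_ratio_bounds small by auto
  obtain z \<sigma> where z: "z \<in> X" "x0 < z" and \<sigma>: "0 < \<sigma>" "\<sigma> < 1" "\<sigma> \<le> worst_offer_prob \<delta> x"
    and close: "x0 / wait_value \<delta> \<sigma> z \<le> x * ((1 - \<delta>) / (\<delta> * worst_offer_prob \<delta> x) + 1) + \<eta>"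
    using worst_case_offer[OF small \<eta>] unfolding x_def by blast
  note ratio_bounds = perf_ratio_zero_hist_bounds[OF p z(1) less_imp_le[OF z(2)] less_imp_le[OF \<sigma>(1)] \<sigma>(2),
      folded r_def]
  have W: "0 < wait_value \<delta> \<sigma> z"
    unfolding wait_value_def using discount \<sigma> z x0_pos wait_denom_pos[of \<delta> \<sigma>] by auto
  show "r \<le> rho x + \<eta>"
  proof (rule ccontr)
    assume "\<not> r \<le> rho x + \<eta>"
    then have r: "rho x + \<eta> < r" "rho x < r"
      using \<eta> by auto
    have "payoff \<delta> p (binary_env z \<sigma>) (zero_hist 0) \<le> (rho x + \<eta>) * wait_value \<delta> \<sigma> z"
    proof (rule zero_hist_potential_bound[OF p z(2) \<sigma>(1) less_imp_le[OF \<sigma>(2)] potential_weight_nonneg[OF x discount]])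
      show "rho x * x0 \<le> payoff \<delta> p (binary_env 0 0) (zero_hist t)" for t
        using r x0_pos by (intro order_trans[OF mult_right_mono ratio_bounds(1)]) auto
      show "(rho x + \<eta>) * wait_value \<delta> \<sigma> z \<le> payoff \<delta> p (binary_env z \<sigma>) (zero_hist t)" for t
        using r W by (intro order_trans[OF mult_right_mono ratio_bounds(2)]) auto
      show "potential_weight \<delta> x * (1 - rho x) \<le> rho x + \<eta> - x0 / wait_value \<delta> \<sigma> z"
        using worst_offer_identity[OF x discount] close by simp
      have "(1 - (rho x + \<eta>)) * (1 - \<delta> + \<delta> * \<sigma>) \<le> (1 - rho x) * (1 - \<delta> + \<delta> * \<sigma>)"
        using \<eta> wait_denom_pos[of \<delta> \<sigma>] discount \<sigma> by (intro mult_right_mono) auto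
      also have "\<dots> \<le> (1 - rho x) * (1 - \<delta> + \<delta> * worst_offer_prob \<delta> x)"
        using rho_lt_one[OF x discount] \<sigma> discount by (intro mult_left_mono) auto
      finally show "(1 - (rho x + \<eta>)) * (1 - \<delta> + \<delta> * \<sigma>) \<le> potential_weight \<delta> x * (1 - \<delta>) * rho x"
        unfolding potential_weight_mult[OF x discount] .
    qed
    then show False
      using ratio_bounds(2)[of 0] mult_strict_right_mono[OF r(1) W] by simp
  qed
qed

lemma opt_ratio_eq_rho:
  assumes "x0 / Sup X \<le> \<delta>\<^sup>2 / (2 - \<delta>)"
  shows "opt_ratio \<delta> X x0 (binary_envs X) = rho (x0 / Sup X)"
proof -
  have bdd: "bdd_above ((\<lambda>p. perf_ratio \<delta> X x0 (binary_envs X) p) ` decision_rules)"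
    using perf_ratio_le_rho[OF assms] by (intro bdd_aboveI2)
  show ?thesis
    unfolding opt_ratio_def
  proof (rule antisym)
    show "(SUP p\<in>decision_rules. perf_ratio \<delta> X x0 (binary_envs X) p) \<le> rho (x0 / Sup X)"
      using perf_ratio_le_rho[OF assms] qbar_in_decision_rules by (intro cSUP_least) auto
    show "rho (x0 / Sup X) \<le> (SUP p\<in>decision_rules. perf_ratio \<delta> X x0 (binary_envs X) p)"
      using cSUP_upper[OF qbar_in_decision_rules bdd] perf_ratio_stationary by simp
  qed
qed

end

theorem theorem1:
  fixes \<delta> x0 :: real and X :: "real set"
  assumes "0 < \<delta>" and "\<delta> < 1"
    and "X \<in> sets borel" and "X \<subseteq> {0..}" and "0 \<in> X" and "bdd_above X"
    and "0 < x0" and "x0 \<le> Sup X"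
  defines "qbar \<equiv> stationary_rule (q_star \<delta> (x0 / Sup X))"
  shows "perf_ratio \<delta> X x0 (binary_envs X) qbar = rho (x0 / Sup X)
         \<and> rho (x0 / Sup X) > 1/2
         \<and> (x0 / Sup X \<le> \<delta>^2 / (2 - \<delta>) \<longrightarrow> dyn_robust \<delta> X x0 (binary_envs X) qbar)"
proof -
  interpret search_problem \<delta> X x0
    using assms by unfold_locales
  show ?thesis
    using perf_ratio_stationary rho_gt_half[OF x0_ratio_bounds(1)] qbar_in_decision_rules opt_ratio_eq_rho
    unfolding qbar_def dyn_robust_def by simp
qed

end
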